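(* The complete bipartite graph $K_{2,2}$ is not isomorphic to the rook equivalence graph $G(B)$ of any Ferrers board $B$.
   Context: A Ferrers board is given by a weakly increasing sequence of non-negative integers $B=(b_1,\ldots,b_n)$ of column heights; it is the set of unit cells in the first quadrant lying in column $i$ and rows $1,\ldots,b_i$. Prepending columns of height $0$ on the left does not change the board, and boards are compared using the same number of columns by such padding. A placement of $k$ rooks on $B$ is a set of $k$ cells of $B$ no two in the same row or column; $r_k(B)$ is the number of such placements. Two boards are rook equivalent if they have equal $r_k$ for all $k\ge 0$. The rook equivalence graph $G(B)$ has as vertices all Ferrers boards rook equivalent to $B$, and $\{B_1,B_2\}$ is an edge iff, written with the same number of columns, $B_1$ and $B_2$ differ in exactly two columns $i$ and $j$, where $B_1$ has $k$ more cells than $B_2$ in column $i$ and $k$ fewer cells than $B_2$ in column $j$, for some $k>0$. *)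

theory Defs
  imports Main
begin

text \<open>A Ferrers board is a weakly increasing list of column heights.\<close>
definition ferrers :: "nat list \<Rightarrow> bool" where
  "ferrers b \<longleftrightarrow> sorted b"

definition cells :: "nat list \<Rightarrow> (nat \<times> nat) set" where
  "cells b = {(i, j). i < length b \<and> 1 \<le> j \<and> j \<le> b ! i}"

definition rook_placements :: "nat list \<Rightarrow> nat \<Rightarrow> (nat \<times> nat) set set" where
  "rook_placements b k = {P. P \<subseteq> cells b \<and> card P = k \<and>
     (\<forall>p\<in>P. \<forall>q\<in>P. p \<noteq> q \<longrightarrow> fst p \<noteq> fst q \<and> snd p \<noteq> snd q)}"

definition rook_num :: "nat list \<Rightarrow> nat \<Rightarrow> nat" where
  "rook_num b k = card (rook_placements b k)"

definition rook_equiv :: "nat list \<Rightarrow> nat list \<Rightarrow> bool" where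
  "rook_equiv b1 b2 \<longleftrightarrow> (\<forall>k. rook_num b1 k = rook_num b2 k)"

definition pad :: "nat \<Rightarrow> nat list \<Rightarrow> nat list" where
  "pad n b = replicate (n - length b) 0 @ b"

text \<open>Canonical representative of a board up to left zero-padding: no zero columns.\<close>
definition reduced_board :: "nat list \<Rightarrow> bool" where
  "reduced_board b \<longleftrightarrow> ferrers b \<and> (\<forall>x\<in>set b. 0 < x)"

definition rook_graph_vertices :: "nat list \<Rightarrow> nat list set" where
  "rook_graph_vertices B = {B'. reduced_board B' \<and> rook_equiv B' B}"

definition rook_graph_edge :: "nat list \<Rightarrow> nat list \<Rightarrow> bool" where
  "rook_graph_edge B1 B2 \<longleftrightarrow>
     (let n = max (length B1) (length B2); c1 = pad n B1; c2 = pad n B2 in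
      \<exists>i j k. i < n \<and> j < n \<and> i \<noteq> j \<and> 0 < k \<and>
        c1 ! i = c2 ! i + k \<and> c1 ! j + k = c2 ! j \<and>
        (\<forall>l<n. l \<noteq> i \<longrightarrow> l \<noteq> j \<longrightarrow> c1 ! l = c2 ! l))"

text \<open>K_{2,2} on vertex set {0,1,2,3} with parts {0,1} and {2,3}.\<close>
definition k22_adj :: "nat \<Rightarrow> nat \<Rightarrow> bool" where
  "k22_adj x y \<longleftrightarrow> ((x < 2) \<noteq> (y < 2))"

definition graph_iso_K22 :: "'a set \<Rightarrow> ('a \<Rightarrow> 'a \<Rightarrow> bool) \<Rightarrow> bool" where
  "graph_iso_K22 V E \<longleftrightarrow> (\<exists>f. bij_betw f V {0..<4::nat} \<and>
     (\<forall>x\<in>V. \<forall>y\<in>V. E x y \<longleftrightarrow> k22_adj (f x) (f y)))"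

end

theory Submission
  imports Defs "HOL-Library.Multiset"
begin

(*
  The proof uses the c-vectors of Goldman, Joichi and White.  Pad a board with zero
  columns to a common number N of columns and put c_l = b_l - l.  The rook numbers are a
  symmetric function of the entries c_l; the c-vectors of Ferrers boards are exactly the
  integer vectors with c_0 >= 0 whose entries never drop by more than one; and an edge of
  G(B) changes two entries of the c-vector keeping their sum, so between rook equivalent
  boards (equal r_2) it exchanges two entries.

  Suppose G(B) is K_{2,2} and let A be the vertex maximising the moment sum_l l * c_l.  Each
  neighbour S, T of A exchanges an entry a of A with a larger entry b further right, and
  for N large a is negative.  Unless b = a + 1 directly follows a and a is the unique
  minimum of A, a case analysis on b - a and on the entries around a and b produces a valid
  rearrangement of A different from A, S, T and the fourth vertex: a fifth vertex.  The
  exceptional shape determines the neighbour from A, so it cannot occur for both S and T.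
*)

section \<open>Rook numbers through the c-vector\<close>

definition non_attacking :: "(nat \<times> nat) set \<Rightarrow> bool" where
  "non_attacking P \<longleftrightarrow> (\<forall>p\<in>P. \<forall>q\<in>P. p \<noteq> q \<longrightarrow> fst p \<noteq> fst q \<and> snd p \<noteq> snd q)"

lemma rook_placements_iff:
  "P \<in> rook_placements b k \<longleftrightarrow> P \<subseteq> cells b \<and> card P = k \<and> non_attacking P"
  by (simp add: rook_placements_def non_attacking_def)

lemma finite_cells: "finite (cells b)"
  by (rule finite_subset[of _ "SIGMA i:{..<length b}. {1..b ! i}"]) (auto simp: cells_def)

lemma finite_rook_placements: "finite (rook_placements b k)"
  by (rule finite_subset[of _ "Pow (cells b)"]) (auto simp: rook_placements_def finite_cells)

lemma fst_less_length_if_cell: "p \<in> cells b \<Longrightarrow> fst p < length b"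
  by (auto simp: cells_def)

lemma cells_snoc: "cells (b @ [h]) = cells b \<union> {length b} \<times> {1..h}"
  by (auto simp: cells_def nth_append less_Suc_eq)

lemma non_attacking_subset: "non_attacking P \<Longrightarrow> Q \<subseteq> P \<Longrightarrow> non_attacking Q"
  unfolding non_attacking_def by blast

lemma non_attacking_insert:
  assumes "non_attacking P" "\<forall>q\<in>P. fst q \<noteq> fst p \<and> snd q \<noteq> snd p"
  shows "non_attacking (insert p P)"
  unfolding non_attacking_def
proof (intro ballI impI)
  fix x y assume "x \<in> insert p P" "y \<in> insert p P" "x \<noteq> y"
  then consider "x = p" "y \<in> P" | "y = p" "x \<in> P" | "x \<in> P" "y \<in> P"
    by auto
  then show "fst x \<noteq> fst y \<and> snd x \<noteq> snd y"
    using assms \<open>x \<noteq> y\<close> unfolding non_attacking_def by cases auto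
qed

lemma rook_placement_inj_on_snd: "P \<in> rook_placements b k \<Longrightarrow> inj_on snd P"
  unfolding rook_placements_def by (auto intro: inj_onI)

lemma rook_placement_rows:
  assumes "P \<in> rook_placements b k" "\<forall>t\<in>set b. t \<le> h"
  shows "snd ` P \<subseteq> {1..h}" "card (snd ` P) = k"
proof -
  have "P \<subseteq> cells b" "card P = k"
    using assms(1) by (auto simp: rook_placements_def)
  show "snd ` P \<subseteq> {1..h}"
  proof
    fix r assume "r \<in> snd ` P"
    then obtain i where "(i, r) \<in> cells b"
      using \<open>P \<subseteq> cells b\<close> by force
    then have "i < length b" "1 \<le> r" "r \<le> b ! i"
      by (auto simp: cells_def)
    then show "r \<in> {1..h}"
      using assms(2) nth_mem[of i b] by fastforce
  qed
  show "card (snd ` P) = k"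
    using \<open>card P = k\<close> card_image[OF rook_placement_inj_on_snd[OF assms(1)]] by simp
qed

lemma rook_num_eq_0_if_gt_height:
  assumes "h < k" "\<forall>t\<in>set b. t \<le> h"
  shows "rook_num b k = 0"
proof -
  have "rook_placements b k = {}"
  proof (rule equals0I)
    fix P assume P: "P \<in> rook_placements b k"
    have "card (snd ` P) \<le> card {1..h}"
      using rook_placement_rows(1)[OF P assms(2)] by (rule card_mono[rotated]) simp
    then show False
      using rook_placement_rows(2)[OF P assms(2)] assms(1) by simp
  qed
  then show ?thesis
    by (simp add: rook_num_def)
qed

lemma rook_num_0 [simp]: "rook_num b 0 = 1"
proof -
  have "rook_placements b 0 = {{}}"
  proof (intro equalityI subsetI)
    fix P assume "P \<in> rook_placements b 0"
    then have "P \<subseteq> cells b" "card P = 0"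
      by (auto simp: rook_placements_def)
    then show "P \<in> {{}}"
      using finite_subset[OF _ finite_cells] by auto
  qed (auto simp: rook_placements_def)
  then show ?thesis
    by (simp add: rook_num_def)
qed

lemma rook_num_Nil_Suc [simp]: "rook_num [] (Suc k) = 0"
  by (auto simp: rook_num_def rook_placements_def cells_def)

lemma insert_rook_last_column:
  assumes "P \<subseteq> cells b"
  shows "insert (length b, r) P \<in> rook_placements (b @ [h]) (Suc k) \<longleftrightarrow>
           P \<in> rook_placements b k \<and> r \<in> {1..h} - snd ` P"
proof -
  have cols: "\<forall>q\<in>P. fst q < length b"
    using assms fst_less_length_if_cell by blast
  then have "(length b, r) \<notin> P"
    by fastforce
  moreover have "finite P"
    using assms finite_cells finite_subset by blast
  ultimately have "card (insert (length b, r) P) = Suc k \<longleftrightarrow> card P = k"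
    by simp
  moreover have "insert (length b, r) P \<subseteq> cells (b @ [h]) \<longleftrightarrow> r \<in> {1..h}"
    using assms fst_less_length_if_cell[of "(length b, r)" b] by (auto simp: cells_snoc)
  moreover have "non_attacking (insert (length b, r) P) \<longleftrightarrow> non_attacking P \<and> r \<notin> snd ` P"
  proof
    assume na: "non_attacking (insert (length b, r) P)"
    then have "r \<notin> snd ` P"
      using cols unfolding non_attacking_def by fastforce
    then show "non_attacking P \<and> r \<notin> snd ` P"
      using non_attacking_subset[OF na] by blast
  next
    assume "non_attacking P \<and> r \<notin> snd ` P"
    then show "non_attacking (insert (length b, r) P)"
      using cols by (intro non_attacking_insert) force+
  qed
  ultimately show ?thesis
    using assms by (auto simp: rook_placements_iff)
qed

lemma rook_placement_remove_last_column:
  assumes Q: "Q \<in> rook_placements (b @ [h]) (Suc k)" and r: "(length b, r) \<in> Q"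
  shows "Q - {(length b, r)} \<in> rook_placements b k \<and> r \<in> {1..h} - snd ` (Q - {(length b, r)})"
proof -
  let ?P = "Q - {(length b, r)}"
  have Q_cells: "Q \<subseteq> cells b \<union> {length b} \<times> {1..h}" and na: "non_attacking Q"
    using Q by (simp_all add: rook_placements_iff cells_snoc)
  have "?P \<subseteq> cells b"
  proof
    fix q assume "q \<in> ?P"
    then have "q \<in> Q" "q \<noteq> (length b, r)"
      by simp_all
    then have "fst q \<noteq> length b"
      using na r unfolding non_attacking_def by fastforce
    then show "q \<in> cells b"
      using subsetD[OF Q_cells \<open>q \<in> Q\<close>] by (auto simp: mem_Times_iff)
  qed
  moreover have "insert (length b, r) ?P = Q"
    using r by blast
  ultimately show ?thesis
    using insert_rook_last_column[of ?P b r h k] Q by simp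
qed

lemma rook_placements_snoc:
  "rook_placements (b @ [h]) (Suc k) =
     rook_placements b (Suc k) \<union>
     (\<lambda>(P, r). insert (length b, r) P) ` (SIGMA P:rook_placements b k. {1..h} - snd ` P)"
  (is "?R = ?Old \<union> ?extend ` ?Sig")
proof (intro equalityI subsetI)
  fix Q assume Q: "Q \<in> ?R"
  show "Q \<in> ?Old \<union> ?extend ` ?Sig"
  proof (cases "\<exists>r. (length b, r) \<in> Q")
    case True
    then obtain r where r: "(length b, r) \<in> Q"
      by blast
    then have "(Q - {(length b, r)}, r) \<in> ?Sig"
      using rook_placement_remove_last_column[OF Q] by simp
    moreover have "Q = ?extend (Q - {(length b, r)}, r)"
      using r by auto
    ultimately show ?thesis
      by blast
  next
    case False
    then have "Q \<subseteq> cells b"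
      using Q by (auto simp: rook_placements_iff cells_snoc)
    then show ?thesis
      using Q by (simp add: rook_placements_iff)
  qed
next
  fix Q assume "Q \<in> ?Old \<union> ?extend ` ?Sig"
  moreover have "cells b \<subseteq> cells (b @ [h])"
    by (simp add: cells_snoc)
  moreover have "?extend x \<in> ?R" if "x \<in> ?Sig" for x
    using that insert_rook_last_column[of "fst x" b "snd x" h k]
    by (auto simp: rook_placements_iff)
  ultimately show "Q \<in> ?R"
    by (auto simp: rook_placements_iff)
qed

lemma rook_num_snoc:
  assumes "\<forall>t\<in>set b. t \<le> h"
  shows "rook_num (b @ [h]) (Suc k) = rook_num b (Suc k) + (h - k) * rook_num b k"
proof -
  let ?extend = "\<lambda>(P, r). insert (length b, r) P"
  let ?Sig = "SIGMA P:rook_placements b k. {1..h} - snd ` P"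
  have no_last_column: "(length b, r) \<notin> P" if "P \<in> rook_placements b j" for P r j
    using that fst_less_length_if_cell by (fastforce simp: rook_placements_iff)
  have "rook_placements b (Suc k) \<inter> ?extend ` ?Sig = {}"
    using no_last_column by fastforce
  moreover have "inj_on ?extend ?Sig"
  proof (rule inj_onI, clarsimp)
    fix P r P' r'
    assume "P \<in> rook_placements b k" "P' \<in> rook_placements b k"
      and ins: "insert (length b, r) P = insert (length b, r') P'"
    then have "r = r'"
      using no_last_column by (metis insertCI insertE prod.inject)
    then show "P = P' \<and> r = r'"
      using ins insert_ident no_last_column \<open>P \<in> _\<close> \<open>P' \<in> _\<close> by metis
  qed
  moreover have "card ?Sig = (h - k) * rook_num b k"
  proof -
    have "card ({1..h} - snd ` P) = h - k" if "P \<in> rook_placements b k" for P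
      using rook_placement_rows[OF that assms] by (simp add: card_Diff_subset finite_subset)
    then show ?thesis
      unfolding rook_num_def by (subst card_SigmaI) (simp_all add: finite_rook_placements)
  qed
  ultimately show ?thesis
    unfolding rook_num_def rook_placements_snoc
    by (simp add: card_Un_disjoint finite_rook_placements card_image)
qed

definition cvec :: "nat list \<Rightarrow> int list" where
  "cvec b = map (\<lambda>l. int (b ! l) - int l) [0..<length b]"

lemma length_cvec [simp]: "length (cvec b) = length b"
  by (simp add: cvec_def)

lemma nth_cvec: "l < length b \<Longrightarrow> cvec b ! l = int (b ! l) - int l"
  by (simp add: cvec_def)

lemma cvec_snoc: "cvec (b @ [h]) = cvec b @ [int h - int (length b)]"
  by (rule nth_equalityI) (auto simp: nth_cvec nth_append)

lemma cvec_Cons_0: "cvec (0 # b) = 0 # map (\<lambda>c. c - 1) (cvec b)"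
  by (rule nth_equalityI) (auto simp: nth_cvec nth_Cons split: nat.split)

lemma cvec_inj: "cvec p = cvec q \<Longrightarrow> p = q"
proof (rule nth_equalityI)
  assume eq: "cvec p = cvec q"
  then show len: "length p = length q"
    by (metis length_cvec)
  show "p ! l = q ! l" if "l < length p" for l
    using arg_cong[OF eq, of "\<lambda>c. c ! l"] that len by (simp add: nth_cvec)
qed

(* The recurrence peels off the last (tallest) column, hence the reversed c-vector in
   rook_num_eq_rooks; by rooks_perm the order of the entries does not matter. *)
fun rooks :: "int list \<Rightarrow> nat \<Rightarrow> int" where
  "rooks cs 0 = 1"
| "rooks [] (Suc k) = 0"
| "rooks (c # cs) (Suc k) = rooks cs (Suc k) + (c + int (length cs) - int k) * rooks cs k"

lemma rooks_swap: "rooks (c # d # cs) k = rooks (d # c # cs) k"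
  by (cases k; cases "k - 1") (auto simp: algebra_simps)

lemma rooks_Cons_cong:
  "(\<And>k. rooks xs k = rooks ys k) \<Longrightarrow> length xs = length ys \<Longrightarrow> rooks (c # xs) k = rooks (c # ys) k"
  by (cases k) auto

lemma rooks_move_to_front: "rooks (xs @ c # ys) k = rooks (c # xs @ ys) k"
proof (induction xs arbitrary: k)
  case (Cons d xs)
  have "rooks (d # xs @ c # ys) k = rooks (d # c # xs @ ys) k"
    by (rule rooks_Cons_cong) (simp_all add: Cons.IH)
  then show ?case
    by (simp add: rooks_swap)
qed simp

lemma rooks_perm: "mset xs = mset ys \<Longrightarrow> rooks xs k = rooks ys k"
proof (induction xs arbitrary: ys k)
  case (Cons c xs)
  then obtain ys1 ys2 where ys: "ys = ys1 @ c # ys2"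
    by (metis list.set_intros(1) set_mset_mset split_list)
  then have "mset xs = mset (ys1 @ ys2)"
    using Cons.prems by simp
  then have "rooks (c # xs) k = rooks (c # ys1 @ ys2) k"
    using Cons.IH mset_eq_length by (intro rooks_Cons_cong) blast+
  then show ?case
    by (simp add: ys rooks_move_to_front)
qed simp

lemma rooks_two: "rooks (c # d # cs) 2 =
    rooks cs 2 + (c + d + 2 * int (length cs) - 1) * rooks cs 1 +
    (c + int (length cs)) * (d + int (length cs))"
  by (simp add: numeral_2_eq_2 algebra_simps)

lemma rook_num_eq_rooks: "sorted b \<Longrightarrow> int (rook_num b k) = rooks (rev (cvec b)) k"
proof (induction b arbitrary: k rule: rev_induct)
  case Nil
  then show ?case
    by (cases k) (auto simp: cvec_def)
next
  case (snoc h b)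
  then have hb: "sorted b" "\<forall>t\<in>set b. t \<le> h"
    by (simp_all add: sorted_append)
  show ?case
  proof (cases k)
    case (Suc j)
    have "int ((h - j) * rook_num b j) = (int h - int j) * rooks (rev (cvec b)) j"
    proof (cases "j \<le> h")
      case False
      then show ?thesis
        using rook_num_eq_0_if_gt_height[of h j b] snoc.IH[OF hb(1), of j, symmetric] hb(2) by simp
    qed (simp add: of_nat_diff snoc.IH[OF hb(1), symmetric])
    then show ?thesis
      using Suc snoc.IH[OF hb(1)] by (simp add: rook_num_snoc[OF hb(2)] cvec_snoc)
  qed simp
qed

lemma rooks_decrement_snoc_0: "rooks (map (\<lambda>c. c - 1) xs @ [0]) k = rooks xs k"
proof (induction xs arbitrary: k)
  case Nil
  then show ?case
    by (cases k; cases "k - 1") auto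
next
  case (Cons c xs)
  then show ?case
    by (cases k) (auto simp: algebra_simps)
qed

lemma rook_num_Cons_0: "sorted b \<Longrightarrow> rook_num (0 # b) k = rook_num b k"
  using rook_num_eq_rooks[of "0 # b" k] rook_num_eq_rooks[of b k]
  by (simp add: cvec_Cons_0 rev_map rooks_decrement_snoc_0)

lemma length_pad: "length X \<le> n \<Longrightarrow> length (pad n X) = n"
  by (simp add: pad_def)

lemma pad_pad: "length X \<le> n \<Longrightarrow> n \<le> N \<Longrightarrow> pad N X = replicate (N - n) 0 @ pad n X"
  by (simp add: pad_def replicate_add[symmetric])

lemma sorted_pad: "sorted X \<Longrightarrow> sorted (pad n X)"
  by (simp add: pad_def sorted_append)

lemma rook_num_pad: "sorted b \<Longrightarrow> rook_num (pad n b) k = rook_num b k"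
proof -
  assume "sorted b"
  then have "rook_num (replicate m 0 @ b) k = rook_num b k" for m
    by (induction m) (simp_all add: rook_num_Cons_0 sorted_append)
  then show ?thesis
    by (simp add: pad_def)
qed

lemma rook_num_eq_rooks_cvec_pad: "sorted b \<Longrightarrow> int (rook_num b k) = rooks (cvec (pad n b)) k"
proof -
  assume "sorted b"
  then have "int (rook_num b k) = rooks (rev (cvec (pad n b))) k"
    using rook_num_eq_rooks[of "pad n b" k] rook_num_pad[of b n k]
    by (simp add: sorted_append pad_def)
  also have "\<dots> = rooks (cvec (pad n b)) k"
    by (rule rooks_perm) simp
  finally show ?thesis .
qed

section \<open>Transfers\<close>

definition transfer :: "'a::cancel_comm_monoid_add list \<Rightarrow> 'a list \<Rightarrow> bool" where
  "transfer xs ys \<longleftrightarrow> length xs = length ys \<and>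
     (\<exists>i<length xs. \<exists>j<length xs. i \<noteq> j \<and> xs ! i \<noteq> ys ! i \<and> xs ! i + xs ! j = ys ! i + ys ! j \<and>
        (\<forall>l<length xs. l \<noteq> i \<longrightarrow> l \<noteq> j \<longrightarrow> xs ! l = ys ! l))"

lemma transferI:
  assumes "length xs = length ys" "i < length xs" "j < length xs" "i \<noteq> j" "xs ! i \<noteq> ys ! i"
    "xs ! i + xs ! j = ys ! i + ys ! j" "\<And>l. l < length xs \<Longrightarrow> l \<noteq> i \<Longrightarrow> l \<noteq> j \<Longrightarrow> xs ! l = ys ! l"
  shows "transfer xs ys"
  unfolding transfer_def using assms by blast

lemma transferE:
  assumes "transfer xs ys"
  obtains i j where "length xs = length ys" "i < length xs" "j < length xs" "i \<noteq> j"
    "xs ! i \<noteq> ys ! i" "xs ! i + xs ! j = ys ! i + ys ! j"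
    "\<forall>l<length xs. l \<noteq> i \<longrightarrow> l \<noteq> j \<longrightarrow> xs ! l = ys ! l"
  using assms unfolding transfer_def by blast

lemma transfer_sym: "transfer xs ys \<Longrightarrow> transfer ys xs"
  unfolding transfer_def by (metis add.commute)

lemma transfer_append_left: "transfer (zs @ xs) (zs @ ys) \<longleftrightarrow> transfer xs ys"
proof
  assume "transfer (zs @ xs) (zs @ ys)"
  then obtain i j where ij: "length xs = length ys" "i < length (zs @ xs)" "j < length (zs @ xs)"
      "i \<noteq> j" "(zs @ xs) ! i \<noteq> (zs @ ys) ! i"
      "(zs @ xs) ! i + (zs @ xs) ! j = (zs @ ys) ! i + (zs @ ys) ! j"
    and rest: "\<forall>l<length (zs @ xs). l \<noteq> i \<longrightarrow> l \<noteq> j \<longrightarrow> (zs @ xs) ! l = (zs @ ys) ! l"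
    by (elim transferE) simp
  have "length zs \<le> i"
    using ij(5) by (auto simp: nth_append split: if_splits)
  moreover have "length zs \<le> j"
    using ij(5,6) calculation by (auto simp: nth_append split: if_splits)
  ultimately obtain i' j' where ij': "i = length zs + i'" "j = length zs + j'"
    using le_Suc_ex by blast
  show "transfer xs ys"
  proof (rule transferI[of _ _ i' j'])
    show "xs ! l = ys ! l" if "l < length xs" "l \<noteq> i'" "l \<noteq> j'" for l
      using rest[rule_format, of "length zs + l"] that ij' by (simp add: nth_append)
  qed (use ij ij' in \<open>auto simp: nth_append\<close>)
next
  assume "transfer xs ys"
  then obtain i j where ij: "length xs = length ys" "i < length xs" "j < length xs" "i \<noteq> j"
      "xs ! i \<noteq> ys ! i" "xs ! i + xs ! j = ys ! i + ys ! j"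
    and rest: "\<forall>l<length xs. l \<noteq> i \<longrightarrow> l \<noteq> j \<longrightarrow> xs ! l = ys ! l"
    by (rule transferE)
  show "transfer (zs @ xs) (zs @ ys)"
  proof (rule transferI[of _ _ "length zs + i" "length zs + j"])
    show "(zs @ xs) ! l = (zs @ ys) ! l"
      if "l < length (zs @ xs)" "l \<noteq> length zs + i" "l \<noteq> length zs + j" for l
      using rest[rule_format, of "l - length zs"] that by (auto simp: nth_append)
  qed (use ij in \<open>auto simp: nth_append\<close>)
qed

lemma transfer_nat_iff:
  fixes xs ys :: "nat list"
  assumes "length xs = n" "length ys = n"
  shows "transfer xs ys \<longleftrightarrow> (\<exists>i j k. i < n \<and> j < n \<and> i \<noteq> j \<and> 0 < k \<and>
      xs ! i = ys ! i + k \<and> xs ! j + k = ys ! j \<and> (\<forall>l<n. l \<noteq> i \<longrightarrow> l \<noteq> j \<longrightarrow> xs ! l = ys ! l))"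
proof
  assume "transfer xs ys"
  then obtain i j where ij: "i < n" "j < n" "i \<noteq> j" "xs ! i \<noteq> ys ! i"
      and sum: "xs ! i + xs ! j = ys ! i + ys ! j"
      and rest: "\<forall>l<n. l \<noteq> i \<longrightarrow> l \<noteq> j \<longrightarrow> xs ! l = ys ! l"
    using assms by (elim transferE) auto
  show "\<exists>i j k. i < n \<and> j < n \<and> i \<noteq> j \<and> 0 < k \<and>
      xs ! i = ys ! i + k \<and> xs ! j + k = ys ! j \<and> (\<forall>l<n. l \<noteq> i \<longrightarrow> l \<noteq> j \<longrightarrow> xs ! l = ys ! l)"
  proof (cases "ys ! i < xs ! i")
    case True
    define k where "k = xs ! i - ys ! i"
    have "0 < k" "xs ! i = ys ! i + k" "xs ! j + k = ys ! j"
      using True sum by (simp_all add: k_def)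
    then show ?thesis
      using ij rest by blast
  next
    case False
    define k where "k = xs ! j - ys ! j"
    have "0 < k" "xs ! j = ys ! j + k" "xs ! i + k = ys ! i"
      using False ij(4) sum by (simp_all add: k_def)
    then show ?thesis
      using ij rest by blast
  qed
next
  assume "\<exists>i j k. i < n \<and> j < n \<and> i \<noteq> j \<and> 0 < k \<and>
      xs ! i = ys ! i + k \<and> xs ! j + k = ys ! j \<and> (\<forall>l<n. l \<noteq> i \<longrightarrow> l \<noteq> j \<longrightarrow> xs ! l = ys ! l)"
  then obtain i j k where "i < n" "j < n" "i \<noteq> j" "0 < k"
      "xs ! i = ys ! i + k" "xs ! j + k = ys ! j" "\<forall>l<n. l \<noteq> i \<longrightarrow> l \<noteq> j \<longrightarrow> xs ! l = ys ! l"
    by blast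
  then show "transfer xs ys"
    using assms by (intro transferI[of _ _ i j]) simp_all
qed

lemma rook_graph_edge_iff_transfer:
  "rook_graph_edge X Y \<longleftrightarrow>
     transfer (pad (max (length X) (length Y)) X) (pad (max (length X) (length Y)) Y)"
  unfolding rook_graph_edge_def Let_def
  by (rule transfer_nat_iff[symmetric]) (simp_all add: pad_def)

lemma transfer_cvec_iff:
  assumes "length p = length q"
  shows "transfer (cvec p) (cvec q) \<longleftrightarrow> transfer p q"
proof -
  have eq: "cvec p ! l = cvec q ! l \<longleftrightarrow> p ! l = q ! l" if "l < length p" for l
    using that assms by (simp add: nth_cvec)
  have sum: "cvec p ! i + cvec p ! j = cvec q ! i + cvec q ! j \<longleftrightarrow> p ! i + p ! j = q ! i + q ! j"
    if "i < length p" "j < length p" for i j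
    using that assms by (auto simp: nth_cvec)
  show ?thesis
  proof
    assume "transfer (cvec p) (cvec q)"
    then obtain i j where "length (cvec p) = length (cvec q)" "i < length (cvec p)"
        "j < length (cvec p)" "i \<noteq> j" "cvec p ! i \<noteq> cvec q ! i"
        "cvec p ! i + cvec p ! j = cvec q ! i + cvec q ! j"
        "\<forall>l<length (cvec p). l \<noteq> i \<longrightarrow> l \<noteq> j \<longrightarrow> cvec p ! l = cvec q ! l"
      by (rule transferE)
    then show "transfer p q"
      using assms eq sum by (intro transferI[of _ _ i j]) auto
  next
    assume "transfer p q"
    then obtain i j where "length p = length q" "i < length p" "j < length p" "i \<noteq> j"
        "p ! i \<noteq> q ! i" "p ! i + p ! j = q ! i + q ! j" "\<forall>l<length p. l \<noteq> i \<longrightarrow> l \<noteq> j \<longrightarrow> p ! l = q ! l"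
      by (rule transferE)
    then show "transfer (cvec p) (cvec q)"
      using assms eq sum by (intro transferI[of _ _ i j]) auto
  qed
qed

lemma rook_graph_edge_iff_transfer_cvec:
  assumes "length X \<le> N" "length Y \<le> N"
  shows "rook_graph_edge X Y \<longleftrightarrow> transfer (cvec (pad N X)) (cvec (pad N Y))"
proof -
  let ?n = "max (length X) (length Y)"
  have "rook_graph_edge X Y \<longleftrightarrow>
      transfer (replicate (N - ?n) 0 @ pad ?n X) (replicate (N - ?n) 0 @ pad ?n Y)"
    by (simp add: rook_graph_edge_iff_transfer transfer_append_left)
  also have "\<dots> \<longleftrightarrow> transfer (pad N X) (pad N Y)"
    using assms pad_pad[of X ?n N] pad_pad[of Y ?n N] by simp
  also have "\<dots> \<longleftrightarrow> transfer (cvec (pad N X)) (cvec (pad N Y))"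
    by (rule transfer_cvec_iff[symmetric]) (simp add: assms length_pad)
  finally show ?thesis .
qed

lemma transfer_exchange: "a \<noteq> b \<Longrightarrow> transfer (u @ a # W @ b # v) (u @ b # W @ a # v)"
  by (rule transferI[of _ _ "length u" "length u + length W + 1"])
    (auto simp: nth_append nth_Cons' add.commute)

lemma take_nth_drop_two:
  assumes "i < j" "j < length xs"
  shows "xs = take i xs @ xs ! i # take (j - Suc i) (drop (Suc i) xs) @ xs ! j # drop (Suc j) xs"
proof -
  let ?D = "drop (Suc i) xs"
  have "?D = take (j - Suc i) ?D @ ?D ! (j - Suc i) # drop (Suc (j - Suc i)) ?D"
    using assms by (intro id_take_nth_drop) simp
  moreover have "?D ! (j - Suc i) = xs ! j" "drop (Suc (j - Suc i)) ?D = drop (Suc j) xs"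
    using assms by simp_all
  ultimately show ?thesis
    using assms id_take_nth_drop[of i xs] by simp
qed

lemma transfer_split:
  assumes "transfer xs ys"
  obtains u a W b v a' b' where "xs = u @ a # W @ b # v" "ys = u @ a' # W @ b' # v"
    "a \<noteq> a'" "a + b = a' + b'"
proof -
  obtain i j where ij: "i < j" "j < length xs" "xs ! i \<noteq> ys ! i" "xs ! i + xs ! j = ys ! i + ys ! j"
    and len: "length xs = length ys"
    and rest: "\<forall>l<length xs. l \<noteq> i \<longrightarrow> l \<noteq> j \<longrightarrow> xs ! l = ys ! l"
  proof -
    obtain i j where "length xs = length ys" "i < length xs" "j < length xs" "i \<noteq> j"
        "xs ! i \<noteq> ys ! i" "xs ! i + xs ! j = ys ! i + ys ! j"
        "\<forall>l<length xs. l \<noteq> i \<longrightarrow> l \<noteq> j \<longrightarrow> xs ! l = ys ! l"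
      using assms by (rule transferE)
    moreover from calculation have "xs ! j \<noteq> ys ! j"
      by auto
    ultimately show ?thesis
      using that[of i j] that[of j i] by (metis add.commute linorder_neqE_nat)
  qed
  have "take i ys = take i xs" "drop (Suc j) ys = drop (Suc j) xs"
    "take (j - Suc i) (drop (Suc i) ys) = take (j - Suc i) (drop (Suc i) xs)"
    using ij rest by (auto intro!: nth_equalityI simp: len)
  then show ?thesis
    using that take_nth_drop_two[OF ij(1,2)] take_nth_drop_two[of i j ys] ij len by metis
qed

lemma transfer_mset_exchange:
  assumes "transfer xs ys" "mset xs = mset ys"
  obtains u a W b v where "xs = u @ a # W @ b # v" "ys = u @ b # W @ a # v" "a \<noteq> b"
proof -
  obtain u a W b v a' b' where xs: "xs = u @ a # W @ b # v" and ys: "ys = u @ a' # W @ b' # v"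
    and "a \<noteq> a'"
    using assms(1) by (rule transfer_split)
  moreover have "{#a, b#} = {#a', b'#}"
    using assms(2) unfolding xs ys by (simp add: add_mset_commute)
  ultimately have "a' = b" "b' = a"
    by (auto simp: add_eq_conv_ex)
  then show ?thesis
    using that xs ys \<open>a \<noteq> a'\<close> by blast
qed

lemma mset_eq_if_transfer_rooks_two_eq:
  fixes xs ys :: "int list"
  assumes "transfer xs ys" "rooks xs 2 = rooks ys 2"
  shows "mset xs = mset ys"
proof -
  obtain u a W b v a' b' where xs: "xs = u @ a # W @ b # v" and ys: "ys = u @ a' # W @ b' # v"
    and "a \<noteq> a'" and sum: "a + b = a' + b'"
    using assms(1) by (rule transfer_split)
  let ?R = "u @ W @ v" and ?n = "int (length (u @ W @ v))"
  have "rooks xs 2 = rooks (a # b # ?R) 2" "rooks ys 2 = rooks (a' # b' # ?R) 2"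
    unfolding xs ys by (rule rooks_perm, simp)+
  then have "(a + ?n) * (b + ?n) = (a' + ?n) * (b' + ?n)"
    using assms(2) sum by (simp add: rooks_two)
  moreover have "(a' - a) * (a' - b) = (a + ?n) * (b + ?n) - (a' + ?n) * (b' + ?n)"
  proof -
    have "b' = a + b - a'"
      using sum by simp
    then show ?thesis
      unfolding \<open>b' = a + b - a'\<close> by (simp add: algebra_simps)
  qed
  ultimately have "(a' - a) * (a' - b) = 0"
    by simp
  then have "a' = b" "b' = a"
    using \<open>a \<noteq> a'\<close> sum by auto
  then show ?thesis
    unfolding xs ys by simp
qed

lemma not_transfer_if_two_increases:
  fixes xs ys :: "'a::ordered_ab_group_add list"
  assumes "p < length xs" "q < length xs" "p \<noteq> q" "xs ! p < ys ! p" "xs ! q < ys ! q"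
  shows "\<not> transfer xs ys"
proof
  assume "transfer xs ys"
  then obtain i j where "i \<noteq> j" "xs ! i + xs ! j = ys ! i + ys ! j"
    and rest: "\<forall>l<length xs. l \<noteq> i \<longrightarrow> l \<noteq> j \<longrightarrow> xs ! l = ys ! l"
    by (elim transferE) blast
  moreover have "p \<in> {i, j}" "q \<in> {i, j}"
    using rest assms by fastforce+
  ultimately have "xs ! i < ys ! i \<and> xs ! j < ys ! j"
    using assms by auto
  then have "xs ! i + xs ! j < ys ! i + ys ! j"
    by (simp add: add_strict_mono)
  then show False
    using \<open>xs ! i + xs ! j = ys ! i + ys ! j\<close> by simp
qed

lemma not_transfer_frame:
  fixes c d :: "'a::ordered_ab_group_add"
  assumes "length M = length M'" "c < c'" "d < d'"
  shows "\<not> transfer (u @ c # M @ d # v) (u @ c' # M' @ d' # v)"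
  by (rule not_transfer_if_two_increases[of "length u" _ "length u + length M + 1"])
    (use assms in \<open>auto simp: nth_append\<close>)

lemma append_Cons_append_Cons_eq_iff:
  "length M = length M' \<Longrightarrow> u @ c # M @ d # v = u @ c' # M' @ d' # v \<longleftrightarrow> c = c' \<and> M = M' \<and> d = d'"
  by simp

section \<open>c-vectors of Ferrers boards\<close>

abbreviation unit_descents :: "int list \<Rightarrow> bool" where
  "unit_descents \<equiv> successively (\<lambda>a b. a \<le> b + 1)"

(* The prepended 1 encodes c_0 >= 0. *)
definition is_cvec :: "int list \<Rightarrow> bool" where
  "is_cvec c \<longleftrightarrow> unit_descents (1 # c)"

lemma is_cvec_iff_nth:
  "is_cvec c \<longleftrightarrow> (c \<noteq> [] \<longrightarrow> 0 \<le> c ! 0) \<and> (\<forall>l. Suc l < length c \<longrightarrow> c ! l \<le> c ! Suc l + 1)"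
proof -
  have "is_cvec c \<longleftrightarrow> (\<forall>i. Suc i < length (1 # c) \<longrightarrow> (1 # c) ! i \<le> (1 # c) ! Suc i + 1)"
    by (simp add: is_cvec_def successively_conv_nth)
  also have "\<dots> \<longleftrightarrow> (c \<noteq> [] \<longrightarrow> 0 \<le> c ! 0) \<and> (\<forall>l. Suc l < length c \<longrightarrow> c ! l \<le> c ! Suc l + 1)"
    by (cases c) (auto simp: All_less_Suc2)
  finally show ?thesis .
qed

lemma is_cvec_append:
  "is_cvec (xs @ ys) \<longleftrightarrow> is_cvec xs \<and> unit_descents ys \<and> (ys \<noteq> [] \<longrightarrow> last (1 # xs) \<le> hd ys + 1)"
  unfolding is_cvec_def using successively_append_iff[of _ "1 # xs" ys] by auto

lemma is_cvec_cvec: "sorted b \<Longrightarrow> is_cvec (cvec b)"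
  unfolding is_cvec_iff_nth
  by (auto simp: nth_cvec sorted_iff_nth_Suc simp flip: length_greater_0_conv)

lemma is_cvec_nonneg: "is_cvec c \<Longrightarrow> l < length c \<Longrightarrow> 0 \<le> c ! l + int l"
  by (induction l) (auto simp: is_cvec_iff_nth)

lemma is_cvec_imp_cvec:
  assumes "is_cvec c"
  obtains b where "sorted b" "cvec b = c"
proof
  let ?b = "map (\<lambda>l. nat (c ! l + int l)) [0..<length c]"
  show "cvec ?b = c"
    by (rule nth_equalityI) (auto simp: nth_cvec is_cvec_nonneg[OF assms])
  show "sorted ?b"
    using assms by (auto simp: sorted_iff_nth_Suc is_cvec_iff_nth)
qed

lemma filter_pos_pad: "reduced_board X \<Longrightarrow> filter ((<) 0) (pad N X) = X"
  by (auto simp: reduced_board_def pad_def filter_id_conv)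

lemma cvec_pad_inj:
  assumes "reduced_board X" "reduced_board Y" "cvec (pad N X) = cvec (pad N Y)"
  shows "X = Y"
proof -
  have "X = filter ((<) 0) (pad N X)"
    using filter_pos_pad[OF assms(1)] by simp
  also have "\<dots> = filter ((<) 0) (pad N Y)"
    using cvec_inj[OF assms(3)] by simp
  also have "\<dots> = Y"
    using filter_pos_pad[OF assms(2)] .
  finally show ?thesis .
qed

lemma pad_filter_pos: "sorted b \<Longrightarrow> pad (length b) (filter ((<) 0) b) = b"
proof (induction b)
  case (Cons t b)
  show ?case
  proof (cases "t = 0")
    case True
    then show ?thesis
      using Cons by (simp add: pad_def Suc_diff_le length_filter_le)
  next
    case False
    with Cons.prems have "filter ((<) 0) (t # b) = t # b"
      by (auto simp: filter_id_conv)
    then show ?thesis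
      by (simp add: pad_def)
  qed
qed (simp add: pad_def)

lemma is_cvec_imp_cvec_pad:
  assumes "is_cvec E"
  obtains R where "reduced_board R" "length R \<le> length E" "cvec (pad (length E) R) = E"
proof -
  obtain b where "sorted b" "cvec b = E"
    using assms by (rule is_cvec_imp_cvec)
  moreover have "reduced_board (filter ((<) 0) b)"
    using \<open>sorted b\<close> by (simp add: reduced_board_def ferrers_def sorted_wrt_filter)
  ultimately show ?thesis
    using that[of "filter ((<) 0) b"] pad_filter_pos[of b] length_filter_le[of "(<) 0" b] by force
qed

lemma cvec_pad_neg:
  assumes "length X \<le> M" "length Y \<le> M" "\<forall>t\<in>set X. t \<le> M" "\<forall>t\<in>set Y. t \<le> M" "2 * M < N"
    and "l < N" "cvec (pad N X) ! l \<noteq> cvec (pad N Y) ! l"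
  shows "cvec (pad N X) ! l < 0"
proof -
  have len: "length (pad N X) = N" "length (pad N Y) = N"
    using assms by (simp_all add: length_pad)
  have "pad N X ! l \<noteq> pad N Y ! l"
    using assms(6,7) len by (simp add: nth_cvec)
  moreover have "pad N Z ! l = 0" if "l < N - M" "length Z \<le> M" for Z
  proof -
    have "l < N - length Z"
      using that by linarith
    then show ?thesis
      by (simp add: pad_def nth_append)
  qed
  ultimately have "N - M \<le> l"
    using assms(1,2) by (metis leI)
  moreover have "pad N X ! l \<le> M"
    using assms(3,6) len nth_mem[of l "pad N X"] by (auto simp: pad_def)
  ultimately show ?thesis
    using assms(5,6) len by (simp add: nth_cvec)
qed

(* moment c is the sum of l * c ! l over all positions l. *)
fun moment :: "int list \<Rightarrow> int" where
  "moment [] = 0"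
| "moment (c # cs) = sum_list cs + moment cs"

lemma moment_append: "moment (xs @ ys) = moment xs + moment ys + int (length xs) * sum_list ys"
  by (induction xs) (auto simp: algebra_simps)

lemma moment_exchange:
  "moment (u @ a # W @ b # v) - moment (u @ b # W @ a # v) = (1 + int (length W)) * (b - a)"
  by (simp add: moment_append algebra_simps)

section \<open>Rearranging two values around a block\<close>

(* If fits_between p x q, both x, x + 1 and x + 1, x can be inserted between p and q
   without creating a drop by more than one. *)
definition fits_between :: "int list \<Rightarrow> int \<Rightarrow> int list \<Rightarrow> bool" where
  "fits_between p x q \<longleftrightarrow> last (1 # p) \<le> x + 1 \<and> (q \<noteq> [] \<longrightarrow> x \<le> hd q)"

lemma fits_between_append_right:
  "q \<noteq> [] \<Longrightarrow> fits_between p x (q @ r) \<longleftrightarrow> fits_between p x q"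
  by (simp add: fits_between_def)

lemma fits_between_append_left:
  "q \<noteq> [] \<Longrightarrow> fits_between (p @ q) x r \<longleftrightarrow> fits_between q x r"
  by (simp add: fits_between_def)

lemma fits_after:
  "z \<le> x \<Longrightarrow> \<exists>p q. w = p @ q \<and> fits_between (u @ z # p) x q"
proof (induction w arbitrary: u z)
  case Nil
  then show ?case
    by (simp add: fits_between_def)
next
  case (Cons z' w)
  show ?case
  proof (cases "x \<le> z'")
    case True
    then show ?thesis
      using Cons.prems by (intro exI[of _ "[]"] exI[of _ "z' # w"]) (simp add: fits_between_def)
  next
    case False
    then obtain p q where "w = p @ q" "fits_between ((u @ [z]) @ z' # p) x q"
      using Cons.IH[of z' "u @ [z]"] by auto
    then have "z' # w = (z' # p) @ q \<and> fits_between (u @ z # z' # p) x q"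
      by simp
    then show ?thesis
      by blast
  qed
qed

lemma fits_before:
  "is_cvec (u @ z # w) \<Longrightarrow> z \<le> x \<Longrightarrow> x < 0 \<Longrightarrow> \<exists>p q. u = p @ q \<and> fits_between p x (q @ z # w)"
proof (induction u arbitrary: z w rule: rev_induct)
  case Nil
  then show ?case
    by (simp add: is_cvec_def)
next
  case (snoc z' u)
  show ?case
  proof (cases "z' \<le> x")
    case True
    then obtain p q where "u = p @ q" "fits_between p x (q @ z' # z # w)"
      using snoc.IH[of z' "z # w"] snoc.prems by auto
    then show ?thesis
      by (intro exI[of _ p] exI[of _ "q @ [z']"]) simp
  next
    case False
    moreover have "z' \<le> z + 1"
      using snoc.prems(1) by (simp add: is_cvec_append successively_Cons)
    ultimately show ?thesis
      using snoc.prems(2)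
      by (intro exI[of _ "u @ [z']"] exI[of _ "[]"]) (simp add: fits_between_def)
  qed
qed

definition blocks :: "'a \<Rightarrow> 'a \<Rightarrow> 'a list \<Rightarrow> 'a list set" where
  "blocks x y W = {x # W @ [y], y # W @ [x], x # y # W, y # x # W, W @ [x, y], W @ [y, x]}"

definition arrangements :: "'a list \<Rightarrow> 'a \<Rightarrow> 'a \<Rightarrow> 'a list \<Rightarrow> 'a list \<Rightarrow> 'a list set" where
  "arrangements u x y W v = (\<lambda>m. u @ m @ v) ` blocks x y W"

lemma in_arrangements:
  "u @ x # W @ y # v \<in> arrangements u x y W v" "u @ y # W @ x # v \<in> arrangements u x y W v"
  "u @ x # y # W @ v \<in> arrangements u x y W v" "u @ y # x # W @ v \<in> arrangements u x y W v"
  "u @ W @ x # y # v \<in> arrangements u x y W v" "u @ W @ y # x # v \<in> arrangements u x y W v"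
  by (simp_all add: arrangements_def blocks_def image_iff)

lemma arrangements_commute: "arrangements u x y W v = arrangements u y x W v"
  unfolding arrangements_def blocks_def by (simp add: insert_commute)

lemma mset_arrangements:
  "E \<in> arrangements u x y W v \<Longrightarrow> mset E = mset (u @ x # y # W @ v)"
  by (auto simp: arrangements_def blocks_def)

lemma is_cvec_arrangements:
  assumes "is_cvec u" "unit_descents W" "unit_descents v" "W \<noteq> []"
    and "fits_between u x W" "fits_between W x v"
  shows "E \<in> arrangements u x (x + 1) W v \<Longrightarrow> is_cvec E"
  using assms unfolding arrangements_def blocks_def fits_between_def
  by (auto simp: is_cvec_append successively_append_iff successively_Cons hd_append)

lemma transfer_move:
  fixes x y :: "'a::cancel_comm_monoid_add"
  assumes "x \<noteq> y" "p < p'" "p + q = p' + q'"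
  shows "transfer (u @ replicate p x @ y # replicate q x @ v)
                  (u @ replicate p' x @ y # replicate q' x @ v)"
proof -
  obtain d where d: "p' = p + Suc d"
    using assms(2) less_iff_Suc_add by auto
  with assms(3) have q: "q = Suc d + q'"
    by simp
  have "transfer ((u @ replicate p x) @ y # replicate d x @ x # (replicate q' x @ v))
                 ((u @ replicate p x) @ x # replicate d x @ y # (replicate q' x @ v))"
    using assms(1) by (rule transfer_exchange[OF not_sym])
  moreover have "replicate q x = replicate d x @ x # replicate q' x"
    "replicate p' x = replicate p x @ x # replicate d x"
    unfolding d q by (simp_all add: replicate_add replicate_append_same)
  ultimately show ?thesis
    by simp
qed

lemma replicate_Cons_eq_imp_eq:
  "y \<noteq> x \<Longrightarrow> replicate p x @ y # xs = replicate p' x @ y # ys \<Longrightarrow> p = p'"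
  by (induction p p' rule: diff_induct)
    (auto simp: append_eq_Cons_conv Cons_replicate_eq eq_commute[of "replicate _ _"])

lemma arrangements_replicate:
  fixes x y :: 'a and r :: nat
  defines "M \<equiv> \<lambda>p. replicate p x @ y # replicate (r + 1 - p) x"
  shows "arrangements u x y (replicate r x) v = (\<lambda>m. u @ m @ v) ` M ` {r + 1, 0, 1, r}"
proof -
  have "x # replicate r x @ [y] = M (r + 1)" "replicate r x @ [x, y] = M (r + 1)"
    "y # replicate r x @ [x] = M 0" "y # x # replicate r x = M 0" "x # y # replicate r x = M 1"
    "replicate r x @ [y, x] = M r"
    by (simp_all add: M_def replicate_append_same replicate_app_Cons_same)
  then show ?thesis
    unfolding arrangements_def blocks_def by (simp add: insert_commute)
qed

lemma transfer_arrangements_replicate: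
  fixes x y :: "'a::cancel_comm_monoid_add"
  assumes "x \<noteq> y" "E \<noteq> E'"
    "E \<in> arrangements u x y (replicate r x) v" "E' \<in> arrangements u x y (replicate r x) v"
  shows "transfer E E'"
proof -
  define L where "L p = u @ replicate p x @ y # replicate (r + 1 - p) x @ v" for p
  have arr: "arrangements u x y (replicate r x) v = L ` {r + 1, 0, 1, r}"
    unfolding arrangements_replicate L_def by (simp add: image_image)
  have "transfer (L p) (L p')" if "p < p'" "p' \<le> r + 1" for p p'
    unfolding L_def using that assms(1) by (intro transfer_move) auto
  moreover obtain p p' where "E = L p" "E' = L p'" "p \<le> r + 1" "p' \<le> r + 1"
    using assms(3,4) arr by auto
  ultimately show ?thesis
    using assms(2) transfer_sym by (metis linorder_neqE_nat order_le_less_trans less_imp_le)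
qed

lemma fifth_arrangement_replicate:
  fixes x y :: "'a::cancel_comm_monoid_add"
  assumes "x \<noteq> y" "0 < r"
    and A: "A \<in> arrangements u x y (replicate r x) v"
    and S: "S \<in> arrangements u x y (replicate r x) v"
    and "\<not> transfer A B" "\<not> transfer S T"
  shows "\<exists>E \<in> arrangements u x y (replicate r x) v. E \<notin> {A, S, B, T}"
proof -
  define L where "L p = u @ replicate p x @ y # replicate (r + 1 - p) x @ v" for p
  have L_inj: "p = p'" if "L p = L p'" for p p'
  proof -
    from that have "replicate p x @ y # replicate (r + 1 - p) x @ v =
        replicate p' x @ y # replicate (r + 1 - p') x @ v"
      by (simp add: L_def)
    with assms(1) show ?thesis
      by (rule replicate_Cons_eq_imp_eq[OF not_sym])
  qed
  have "L 0 \<noteq> L 1" "L 0 \<noteq> L (r + 1)" "L 1 \<noteq> L (r + 1)"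
    using assms(2) L_inj by fastforce+
  moreover have "{L 0, L 1, L (r + 1)} \<subseteq> arrangements u x y (replicate r x) v"
    unfolding arrangements_replicate L_def by auto
  ultimately obtain E where E: "E \<in> arrangements u x y (replicate r x) v" "E \<noteq> A" "E \<noteq> S"
    by (metis insert_subset)
  then have "transfer A E" "transfer S E"
    using transfer_arrangements_replicate[OF assms(1)] A S by (metis E(2,3))+
  then show ?thesis
    using E assms(5,6) by blast
qed

lemma Cons_eq_snoc_imp_replicate: "x # W = W @ [x] \<Longrightarrow> W = replicate (length W) x"
  by (induction W) auto

(* The only possible coincidence is between one of x # y # W, y # x # W and one of
   W @ [x, y], W @ [y, x], and both would force hd W = x and hd W = y. *)
lemma five_distinct_blocks:
  assumes "x \<noteq> y" "W \<noteq> []" "W \<noteq> replicate (length W) x" "W \<noteq> replicate (length W) y"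
  obtains ms where "set ms \<subseteq> blocks x y W" "distinct ms" "length ms = 5"
proof -
  have nx: "x # W \<noteq> W @ [x]"
    using assms(3) Cons_eq_snoc_imp_replicate by metis
  have ny: "y # W \<noteq> W @ [y]"
    using assms(4) Cons_eq_snoc_imp_replicate by metis
  have snoc_ne: "x # W @ [y] \<noteq> W @ [x, y]" "x # W @ [y] \<noteq> W @ [y, x]"
      "y # W @ [x] \<noteq> W @ [x, y]" "y # W @ [x] \<noteq> W @ [y, x]"
    using assms(1) nx ny append1_eq_conv[of "x # W" y "W @ [x]" y]
      append1_eq_conv[of "x # W" y "W @ [y]" x] append1_eq_conv[of "y # W" x "W @ [x]" y]
      append1_eq_conv[of "y # W" x "W @ [y]" x]
    by auto
  have cons_ne: "x # W @ [y] \<noteq> x # y # W" "y # W @ [x] \<noteq> y # x # W"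
    using nx ny by auto
  show ?thesis
  proof (cases "x # y # W \<in> {W @ [x, y], W @ [y, x]}")
    case True
    have hd_W: "hd W = a" if "a # b # W = W @ zs" for a b zs
      using arg_cong[of _ _ hd, OF that] hd_append2[OF assms(2), of zs] by simp
    with True have "hd W = x"
      by blast
    then have "y # x # W \<notin> {W @ [x, y], W @ [y, x]}"
      using assms(1) hd_W by blast
    then show ?thesis
      using that[of "[x # W @ [y], y # W @ [x], y # x # W, W @ [x, y], W @ [y, x]]"]
        assms(1) snoc_ne cons_ne by (auto simp: blocks_def)
  next
    case False
    then show ?thesis
      using that[of "[x # W @ [y], y # W @ [x], x # y # W, W @ [x, y], W @ [y, x]]"]
        assms(1) snoc_ne cons_ne by (auto simp: blocks_def)
  qed
qed

lemma card_arrangements_ge_5: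
  assumes "x \<noteq> y" "W \<noteq> []" "W \<noteq> replicate (length W) x" "W \<noteq> replicate (length W) y"
  shows "5 \<le> card (arrangements u x y W v)"
proof -
  obtain ms where ms: "set ms \<subseteq> blocks x y W" "distinct ms" "length ms = 5"
    using assms by (rule five_distinct_blocks)
  have "card (arrangements u x y W v) = card (blocks x y W)"
    unfolding arrangements_def by (rule card_image) (simp add: inj_on_def)
  also have "\<dots> \<ge> card (set ms)"
    using ms(1) by (rule card_mono[rotated]) (simp add: blocks_def)
  finally show ?thesis
    using ms(2,3) by (simp add: distinct_card)
qed

lemma fifth_arrangement:
  fixes x y :: "'a::cancel_comm_monoid_add"
  assumes "x \<noteq> y" "W \<noteq> []"
    and "A \<in> arrangements u x y W v" "S \<in> arrangements u x y W v"
    and "\<not> transfer A B" "\<not> transfer S T"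
  shows "\<exists>E \<in> arrangements u x y W v. E \<notin> {A, S, B, T}"
proof -
  consider "W = replicate (length W) x" | "W = replicate (length W) y"
    | "W \<noteq> replicate (length W) x" "W \<noteq> replicate (length W) y"
    by blast
  then show ?thesis
  proof cases
    case 1
    then show ?thesis
      using fifth_arrangement_replicate[of x y "length W"] assms by simp
  next
    case 2
    then show ?thesis
      using fifth_arrangement_replicate[of y x "length W"] assms by (simp add: arrangements_commute)
  next
    case 3
    then have "5 \<le> card (arrangements u x y W v)"
      using assms(1,2) by (rule card_arrangements_ge_5[rotated 2])
    moreover have "card {A, S, B, T} \<le> 4"
      using card_length[of "[A, S, B, T]"] by simp
    moreover have "card (arrangements u x y W v) \<le> card {A, S, B, T}"
      if "arrangements u x y W v \<subseteq> {A, S, B, T}"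
      using that by (rule card_mono[rotated]) simp
    ultimately show ?thesis
      by fastforce
  qed
qed

lemma fifth_cvec_in_arrangements:
  assumes "is_cvec u" "unit_descents W" "unit_descents v" "W \<noteq> []"
    and "fits_between u x W" "fits_between W x v"
    and "A \<in> arrangements u x (x + 1) W v" "S \<in> arrangements u x (x + 1) W v"
    and "\<not> transfer A B" "\<not> transfer S T"
  shows "\<exists>E. is_cvec E \<and> mset E = mset A \<and> E \<notin> {A, S, B, T}"
proof -
  obtain E where "E \<in> arrangements u x (x + 1) W v" "E \<notin> {A, S, B, T}"
    using fifth_arrangement[OF _ assms(4,7-10)] by auto
  then show ?thesis
    using assms is_cvec_arrangements mset_arrangements by metis
qed

section \<open>A fifth c-vector\<close>

(* Moving b next to a (E1) or W in front of a (E2) gives two valid c-vectors.  From E1 to E2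
   the entries at both exchanged positions increase, so no transfer joins them and they
   cannot be B and T. *)
lemma fifth_cvec_wide_exchange:
  fixes a b :: int
  assumes A: "is_cvec (u @ a # W @ b # v)" and S: "is_cvec (u @ b # W @ a # v)"
    and "a + 2 \<le> b" "transfer B T"
  shows "\<exists>E. is_cvec E \<and> mset E = mset (u @ a # W @ b # v) \<and>
           E \<notin> {u @ a # W @ b # v, u @ b # W @ a # v, B, T}"
proof -
  have "W \<noteq> []"
    using S \<open>a + 2 \<le> b\<close> by (auto simp: is_cvec_append successively_Cons)
  then have hd_W: "b \<le> hd W + 1" and last_W: "last W \<le> a + 1"
    using S by (auto simp: is_cvec_append successively_append_iff successively_Cons hd_append)
  define E1 where "E1 = u @ a # (b # butlast W) @ last W # v"
  define E2 where "E2 = u @ hd W # (tl W @ [a]) @ b # v"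
  have E1: "E1 = u @ a # b # W @ v" and E2: "E2 = u @ W @ a # b # v"
    using \<open>W \<noteq> []\<close> by (simp_all add: E1_def E2_def)
  have "is_cvec E1" "is_cvec E2"
    unfolding E1 E2 using A S \<open>W \<noteq> []\<close> \<open>a + 2 \<le> b\<close>
    by (auto simp: is_cvec_append successively_append_iff successively_Cons hd_append)
  moreover have "mset E1 = mset (u @ a # W @ b # v)" "mset E2 = mset (u @ a # W @ b # v)"
    unfolding E1 E2 by simp_all
  moreover have len: "length (b # butlast W) = length W" "length (tl W @ [a]) = length W"
    using \<open>W \<noteq> []\<close> by simp_all
  then have "E1 \<noteq> u @ a # W @ b # v \<and> E1 \<noteq> u @ b # W @ a # v"
    "E2 \<noteq> u @ a # W @ b # v \<and> E2 \<noteq> u @ b # W @ a # v"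
    unfolding E1_def E2_def using hd_W last_W \<open>a + 2 \<le> b\<close>
    by (simp_all add: append_Cons_append_Cons_eq_iff)
  moreover have "E1 \<notin> {B, T} \<or> E2 \<notin> {B, T}"
  proof -
    have "\<not> transfer E1 E2"
      unfolding E1_def E2_def using len hd_W last_W \<open>a + 2 \<le> b\<close> by (intro not_transfer_frame) auto
    moreover have "E1 \<noteq> E2"
      unfolding E1_def E2_def using len hd_W \<open>a + 2 \<le> b\<close>
      by (simp add: append_Cons_append_Cons_eq_iff)
    ultimately show ?thesis
      using \<open>transfer B T\<close> transfer_sym by auto
  qed
  ultimately show ?thesis
    by blast
qed

lemma fifth_cvec_separated_exchange:
  fixes x :: int
  assumes A: "is_cvec (u @ x # W @ (x + 1) # v)" and S: "is_cvec (u @ (x + 1) # W @ x # v)"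
    and "W \<noteq> []"
    and "\<not> transfer (u @ x # W @ (x + 1) # v) B" "\<not> transfer (u @ (x + 1) # W @ x # v) T"
  shows "\<exists>E. is_cvec E \<and> mset E = mset (u @ x # W @ (x + 1) # v) \<and>
           E \<notin> {u @ x # W @ (x + 1) # v, u @ (x + 1) # W @ x # v, B, T}"
proof (rule fifth_cvec_in_arrangements)
  show "is_cvec u" "unit_descents W" "unit_descents v" "fits_between u x W" "fits_between W x v"
    using A S \<open>W \<noteq> []\<close>
    by (auto simp: is_cvec_append successively_append_iff successively_Cons hd_append
        fits_between_def)
qed (use assms in_arrangements in auto)

(* An entry z <= x elsewhere yields a place where x and x + 1 fit (fits_before, fits_after);
   the entries between that place and the pair form the block of fifth_cvec_in_arrangements. *)
lemma fifth_cvec_adjacent_exchange: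
  fixes x :: int
  assumes A: "is_cvec (u @ x # (x + 1) # v)" and "x < 0" "z \<in> set u \<union> set v" "z \<le> x"
    and AB: "\<not> transfer (u @ x # (x + 1) # v) B" and ST: "\<not> transfer (u @ (x + 1) # x # v) T"
  shows "\<exists>E. is_cvec E \<and> mset E = mset (u @ x # (x + 1) # v) \<and>
           E \<notin> {u @ x # (x + 1) # v, u @ (x + 1) # x # v, B, T}"
  using \<open>z \<in> set u \<union> set v\<close>
proof
  assume "z \<in> set u"
  then obtain u1 u2 where u: "u = u1 @ z # u2"
    by (meson split_list)
  then obtain p q where "u1 = p @ q" "fits_between p x (q @ z # u2 @ x # (x + 1) # v)"
    using fits_before[of u1 z "u2 @ x # (x + 1) # v" x] A \<open>x < 0\<close> \<open>z \<le> x\<close> by auto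
  moreover define Q where "Q = q @ z # u2"
  ultimately have u: "u = p @ Q" and "fits_between p x Q" and "Q \<noteq> []"
    using u fits_between_append_right[of Q p x] by auto
  show ?thesis
    unfolding u
  proof (rule fifth_cvec_in_arrangements)
    show "is_cvec p" "unit_descents Q" "unit_descents v" "fits_between Q x v"
      using A \<open>Q \<noteq> []\<close> unfolding u
      by (auto simp: is_cvec_append successively_append_iff successively_Cons hd_append
          fits_between_def)
  qed (use AB ST \<open>fits_between p x Q\<close> \<open>Q \<noteq> []\<close> in_arrangements u in auto)
next
  assume "z \<in> set v"
  then obtain v1 v2 where v: "v = v1 @ z # v2"
    by (meson split_list)
  then obtain p q where "v2 = p @ q" "fits_between ((u @ x # (x + 1) # v1) @ z # p) x q"
    using fits_after[of z x v2 "u @ x # (x + 1) # v1"] \<open>z \<le> x\<close> by auto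
  moreover define Q where "Q = v1 @ z # p"
  ultimately have v: "v = Q @ q" and "fits_between Q x q" and "Q \<noteq> []"
    using v fits_between_append_left[of Q "u @ x # [x + 1]" x q] by auto
  show ?thesis
    unfolding v
  proof (rule fifth_cvec_in_arrangements)
    show "is_cvec u" "unit_descents Q" "unit_descents q" "fits_between u x Q"
      using A \<open>Q \<noteq> []\<close> unfolding v
      by (auto simp: is_cvec_append successively_append_iff successively_Cons hd_append
          fits_between_def)
  qed (use AB ST \<open>fits_between Q x q\<close> \<open>Q \<noteq> []\<close> in_arrangements v in auto)
qed

lemma exchange_cases:
  fixes a b :: int
  assumes A: "is_cvec (u @ a # W @ b # v)" and S: "is_cvec (u @ b # W @ a # v)"
    and "a < b" "a < 0"
    and "\<not> transfer (u @ a # W @ b # v) B" "\<not> transfer (u @ b # W @ a # v) T" "transfer B T"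
  shows "(\<exists>E. is_cvec E \<and> mset E = mset (u @ a # W @ b # v) \<and>
            E \<notin> {u @ a # W @ b # v, u @ b # W @ a # v, B, T}) \<or>
         (W = [] \<and> b = a + 1 \<and> (\<forall>z \<in> set u \<union> set v. a < z))"
proof (cases "a + 2 \<le> b")
  case True
  then show ?thesis
    using fifth_cvec_wide_exchange assms by blast
next
  case False
  with \<open>a < b\<close> have b: "b = a + 1"
    by simp
  show ?thesis
  proof (cases "W = []")
    case False
    then show ?thesis
      using fifth_cvec_separated_exchange[of u a W v B T] assms b by simp
  next
    case True
    show ?thesis
    proof (cases "\<forall>z \<in> set u \<union> set v. a < z")
      case False
      then obtain z where "z \<in> set u \<union> set v" "z \<le> a"
        by (auto simp: not_less)
      then show ?thesis
        using fifth_cvec_adjacent_exchange[of u a v z B T] assms b \<open>W = []\<close> by simp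
    qed (simp add: b \<open>W = []\<close>)
  qed
qed

lemma strict_min_position_unique:
  fixes a a' :: "'a::order"
  assumes "u @ a # w = u' @ a' # w'" "\<forall>z \<in> set u \<union> set w. a < z" "\<forall>z \<in> set u' \<union> set w'. a' < z"
  shows "u = u' \<and> a = a' \<and> w = w'"
proof -
  have "set (u @ a # w) = set (u' @ a' # w')"
    using assms(1) by simp
  then have "a' \<in> set (u @ a # w)" "a \<in> set (u' @ a' # w')"
    by (metis in_set_conv_decomp)+
  moreover have "a < a'" if "a' \<in> set (u @ w)"
    using that assms(2) by simp
  moreover have "a' < a" if "a \<in> set (u' @ w')"
    using that assms(3) by simp
  ultimately have "a = a'"
    by fastforce
  moreover have "a \<notin> set u" "a \<notin> set w" "a' \<notin> set u'" "a' \<notin> set w'"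
    using assms(2,3) by auto
  ultimately show ?thesis
    using assms(1) append_Cons_eq_iff by metis
qed

lemma neighbour_cases:
  fixes A S :: "int list"
  assumes "is_cvec A" "is_cvec S" "transfer A S" "mset S = mset A" "moment S \<le> moment A"
    and neg: "\<forall>l<length A. A ! l \<noteq> S ! l \<longrightarrow> A ! l < 0"
    and "\<not> transfer A B" "\<not> transfer S T" "transfer B T"
  shows "(\<exists>E. is_cvec E \<and> mset E = mset A \<and> E \<notin> {A, S, B, T}) \<or>
         (\<exists>u a v. A = u @ a # (a + 1) # v \<and> S = u @ (a + 1) # a # v \<and> (\<forall>z \<in> set u \<union> set v. a < z))"
proof -
  obtain u a W b v where A: "A = u @ a # W @ b # v" and S: "S = u @ b # W @ a # v" and "a \<noteq> b"
    using transfer_mset_exchange[OF assms(3) assms(4)[symmetric]] by blast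
  have "0 \<le> (1 + int (length W)) * (b - a)"
    using \<open>moment S \<le> moment A\<close> moment_exchange[of u a W b v] unfolding A S by linarith
  with \<open>a \<noteq> b\<close> have "a < b"
    by (simp add: zero_le_mult_iff)
  moreover have "a < 0"
    using neg[rule_format, of "length u"] \<open>a \<noteq> b\<close> unfolding A S by simp
  moreover have "is_cvec (u @ a # W @ b # v)" "is_cvec (u @ b # W @ a # v)"
    "\<not> transfer (u @ a # W @ b # v) B" "\<not> transfer (u @ b # W @ a # v) T"
    using assms unfolding A S by simp_all
  ultimately consider
      (fifth) "\<exists>E. is_cvec E \<and> mset E = mset A \<and> E \<notin> {A, S, B, T}"
    | (adjacent) "W = []" "b = a + 1" "\<forall>z \<in> set u \<union> set v. a < z"
    using exchange_cases[of u a W b v B T] \<open>transfer B T\<close> unfolding A S by blast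
  then show ?thesis
  proof cases
    case adjacent
    then have "A = u @ a # (a + 1) # v" "S = u @ (a + 1) # a # v"
      unfolding A S by simp_all
    then show ?thesis
      using adjacent(3) by blast
  qed blast
qed

lemma fifth_cvec_K22:
  fixes A B S T :: "int list"
  assumes "is_cvec A" "is_cvec S" "is_cvec T"
    and "transfer A S" "transfer A T" "transfer B S" "transfer B T"
    and "\<not> transfer A B" "\<not> transfer S T" "S \<noteq> T"
    and "mset S = mset A" "mset T = mset A"
    and "moment S \<le> moment A" "moment T \<le> moment A"
    and "\<forall>l<length A. A ! l \<noteq> S ! l \<longrightarrow> A ! l < 0" "\<forall>l<length A. A ! l \<noteq> T ! l \<longrightarrow> A ! l < 0"
  shows "\<exists>E. is_cvec E \<and> mset E = mset A \<and> E \<notin> {A, B, S, T}"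
proof (rule ccontr)
  assume no_fifth: "\<nexists>E. is_cvec E \<and> mset E = mset A \<and> E \<notin> {A, B, S, T}"
  obtain u a v where "A = u @ a # (a + 1) # v" "S = u @ (a + 1) # a # v" "\<forall>z \<in> set u \<union> set v. a < z"
    using neighbour_cases[of A S B T] no_fifth assms by blast
  moreover obtain u' a' v' where "A = u' @ a' # (a' + 1) # v'" "T = u' @ (a' + 1) # a' # v'"
    "\<forall>z \<in> set u' \<union> set v'. a' < z"
    using neighbour_cases[of A T B S] no_fifth assms transfer_sym by blast
  ultimately have "u = u' \<and> a = a' \<and> (a + 1) # v = (a' + 1) # v'"
    by (intro strict_min_position_unique) auto
  then show False
    using \<open>S \<noteq> T\<close> \<open>S = _\<close> \<open>T = _\<close> by simp
qed

section \<open>The rook equivalence graph\<close>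

lemma K22_vertices:
  assumes "graph_iso_K22 V E"
  obtains a0 a1 c0 c1 where "V = {a0, a1, c0, c1}"
    "a0 \<noteq> a1" "c0 \<noteq> c1" "c0 \<notin> {a0, a1}" "c1 \<notin> {a0, a1}"
    "\<forall>x\<in>V. \<forall>y\<in>V. E x y \<longleftrightarrow> (x \<in> {a0, a1}) \<noteq> (y \<in> {a0, a1})"
proof -
  obtain g where bij: "bij_betw g V {0..<4}" and iso: "\<forall>x\<in>V. \<forall>y\<in>V. E x y \<longleftrightarrow> k22_adj (g x) (g y)"
    using assms unfolding graph_iso_K22_def by blast
  have onto: "\<exists>x\<in>V. g x = i" if "i < 4" for i
    using bij that unfolding bij_betw_def by (metis atLeastLessThan_iff image_iff zero_le)
  obtain a0 a1 c0 c1 where vs: "a0 \<in> V" "a1 \<in> V" "c0 \<in> V" "c1 \<in> V"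
    and g: "g a0 = 0" "g a1 = 1" "g c0 = 2" "g c1 = 3"
    using onto[of 0] onto[of 1] onto[of 2] onto[of 3] by auto
  have V: "V = {a0, a1, c0, c1}"
  proof
    show "V \<subseteq> {a0, a1, c0, c1}"
    proof
      fix X assume "X \<in> V"
      then have "g X < 4"
        using bij by (auto simp: bij_betw_def)
      then have "g X \<in> {g a0, g a1, g c0, g c1}"
        using g by (auto simp: eval_nat_numeral less_Suc_eq)
      moreover have "inj_on g V"
        using bij by (simp add: bij_betw_def)
      ultimately show "X \<in> {a0, a1, c0, c1}"
        using inj_onD[of g V X] vs \<open>X \<in> V\<close> by blast
    qed
  qed (use vs in auto)
  moreover have "a0 \<noteq> a1" "c0 \<noteq> c1" "c0 \<notin> {a0, a1}" "c1 \<notin> {a0, a1}"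
    using g by auto
  moreover have "\<forall>x\<in>V. \<forall>y\<in>V. E x y \<longleftrightarrow> (x \<in> {a0, a1}) \<noteq> (y \<in> {a0, a1})"
    using iso g unfolding V by (auto simp: k22_adj_def)
  ultimately show ?thesis
    by (rule that)
qed

lemma K22_configuration:
  fixes f :: "'a \<Rightarrow> 'b::linorder"
  assumes "graph_iso_K22 V E"
  obtains A B S T where "V = {A, B, S, T}" "S \<noteq> T"
    "E A S" "E A T" "E B S" "E B T" "\<not> E A B" "\<not> E S T" "f S \<le> f A" "f T \<le> f A"
proof -
  obtain a0 a1 c0 c1 where V: "V = {a0, a1, c0, c1}" and distinct: "a0 \<noteq> a1" "c0 \<noteq> c1"
      "c0 \<notin> {a0, a1}" "c1 \<notin> {a0, a1}"
    and edges: "\<forall>x\<in>V. \<forall>y\<in>V. E x y \<longleftrightarrow> (x \<in> {a0, a1}) \<noteq> (y \<in> {a0, a1})"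
    using assms by (rule K22_vertices)
  have fin: "finite (f ` V)" and ne: "f ` V \<noteq> {}"
    using V by simp_all
  obtain A where "Max (f ` V) = f A" "A \<in> V"
    using Max_in[OF fin ne] by (rule imageE)
  then have max: "\<forall>X\<in>V. f X \<le> f A"
    using fin by (metis Max_ge imageI)
  consider "A = a0" | "A = a1" | "A = c0" | "A = c1"
    using \<open>A \<in> V\<close> V by blast
  then show ?thesis
  proof cases
    case 1
    then show ?thesis
      using that[of a0 a1 c0 c1] max edges distinct V by auto
  next
    case 2
    then show ?thesis
      using that[of a1 a0 c0 c1] max edges distinct V by (auto simp: insert_commute)
  next
    case 3
    then show ?thesis
      using that[of c0 c1 a0 a1] max edges distinct V by (auto simp: insert_commute)
  next
    case 4
    then show ?thesis
      using that[of c1 c0 a0 a1] max edges distinct V by (auto simp: insert_commute)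
  qed
qed

lemma cvec_pad_rook_graph_vertex:
  assumes "X \<in> rook_graph_vertices B0"
  shows "reduced_board X" "is_cvec (cvec (pad N X))"
    "rooks (cvec (pad N X)) k = int (rook_num B0 k)"
proof -
  show "reduced_board X"
    using assms by (simp add: rook_graph_vertices_def)
  then have "sorted X"
    by (simp add: reduced_board_def ferrers_def)
  then show "is_cvec (cvec (pad N X))" "rooks (cvec (pad N X)) k = int (rook_num B0 k)"
    using assms rook_num_eq_rooks_cvec_pad[of X k N]
    by (simp_all add: is_cvec_cvec sorted_pad rook_graph_vertices_def rook_equiv_def)
qed

lemma rook_graph_vertex_of_cvec:
  assumes "is_cvec E" "\<And>k. rooks E k = int (rook_num B0 k)"
  obtains R where "R \<in> rook_graph_vertices B0" "cvec (pad (length E) R) = E"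
proof -
  obtain R where R: "reduced_board R" "cvec (pad (length E) R) = E"
    using assms(1) by (rule is_cvec_imp_cvec_pad)
  then have "int (rook_num R k) = int (rook_num B0 k)" for k
    using rook_num_eq_rooks_cvec_pad[of R k "length E"] assms(2)
    by (simp add: reduced_board_def ferrers_def)
  then have "R \<in> rook_graph_vertices B0"
    using R(1) by (simp add: rook_graph_vertices_def rook_equiv_def)
  then show ?thesis
    using that R(2) by blast
qed

lemma rook_graph_fifth_vertex:
  assumes vertices: "{A, B, S, T} \<subseteq> rook_graph_vertices B0"
    and bounds: "\<forall>X\<in>{A, B, S, T}. length X \<le> M \<and> (\<forall>t\<in>set X. t \<le> M)" and "2 * M < N"
    and edges: "rook_graph_edge A S" "rook_graph_edge A T"
      "rook_graph_edge B S" "rook_graph_edge B T"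
    and non_edges: "\<not> rook_graph_edge A B" "\<not> rook_graph_edge S T" and "S \<noteq> T"
    and moments: "moment (cvec (pad N S)) \<le> moment (cvec (pad N A))"
      "moment (cvec (pad N T)) \<le> moment (cvec (pad N A))"
  shows "\<exists>R \<in> rook_graph_vertices B0. R \<notin> {A, B, S, T}"
proof -
  let ?c = "\<lambda>X. cvec (pad N X)"
  note vertex = cvec_pad_rook_graph_vertex[OF subsetD[OF vertices]]
  have len: "length X \<le> N" if "X \<in> {A, B, S, T}" for X
    using that bounds \<open>2 * M < N\<close> by fastforce
  have edge_iff: "rook_graph_edge X Y \<longleftrightarrow> transfer (?c X) (?c Y)"
    if "X \<in> {A, B, S, T}" "Y \<in> {A, B, S, T}" for X Y
    using len[OF that(1)] len[OF that(2)] by (rule rook_graph_edge_iff_transfer_cvec)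
  have transfers: "transfer (?c A) (?c S)" "transfer (?c A) (?c T)" "transfer (?c B) (?c S)"
    "transfer (?c B) (?c T)" "\<not> transfer (?c A) (?c B)" "\<not> transfer (?c S) (?c T)"
    using edges non_edges by (simp_all add: edge_iff)
  have "mset (?c S) = mset (?c A)" "mset (?c T) = mset (?c A)"
    using transfers(1,2) vertex(3) by (metis insertCI mset_eq_if_transfer_rooks_two_eq)+
  moreover have "\<forall>l<length (?c A). ?c A ! l \<noteq> ?c X ! l \<longrightarrow> ?c A ! l < 0" if "X \<in> {S, T}" for X
    using that bounds cvec_pad_neg[of A M X N] \<open>2 * M < N\<close> len by (auto simp: length_pad)
  moreover have "?c S \<noteq> ?c T"
    using \<open>S \<noteq> T\<close> vertex(1) cvec_pad_inj by blast
  ultimately obtain E where E: "is_cvec E" "mset E = mset (?c A)" "E \<notin> ?c ` {A, B, S, T}"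
    using fifth_cvec_K22[of "?c A" "?c S" "?c T" "?c B"] transfers moments vertex(2) by auto
  have "length E = N"
    using mset_eq_length[OF E(2)] len by (simp add: length_pad)
  moreover have "rooks E k = int (rook_num B0 k)" for k
    using rooks_perm[OF E(2)] vertex(3) by simp
  ultimately obtain R where "R \<in> rook_graph_vertices B0" "?c R = E"
    using rook_graph_vertex_of_cvec[OF E(1)] by metis
  then show ?thesis
    using E(3) by blast
qed

theorem theorem12:
  fixes B :: "nat list"
  assumes "ferrers B"
  shows "\<not> graph_iso_K22 (rook_graph_vertices B) rook_graph_edge"
proof
  let ?V = "rook_graph_vertices B"
  assume iso: "graph_iso_K22 ?V rook_graph_edge"
  then have "finite ?V"
    unfolding graph_iso_K22_def by (metis bij_betw_finite finite_atLeastLessThan)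
  define M where "M = (\<Sum>X\<in>?V. length X + sum_list X)"
  \<comment> \<open>Padded to N > 2 M columns, two vertices differ only in columns l > M, where c_l < 0.\<close>
  define N where "N = 2 * M + 1"
  have bounds: "\<forall>X\<in>?V. length X \<le> M \<and> (\<forall>t\<in>set X. t \<le> M)"
    using member_le_sum_list member_le_sum[OF _ _ \<open>finite ?V\<close>]
    unfolding M_def by (meson le_add1 le_add2 order_trans zero_le)
  obtain A B' S T where "?V = {A, B', S, T}" "S \<noteq> T"
    "rook_graph_edge A S" "rook_graph_edge A T" "rook_graph_edge B' S" "rook_graph_edge B' T"
    "\<not> rook_graph_edge A B'" "\<not> rook_graph_edge S T"
    "moment (cvec (pad N S)) \<le> moment (cvec (pad N A))"
    "moment (cvec (pad N T)) \<le> moment (cvec (pad N A))"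
    by (rule K22_configuration[OF iso, where f = "\<lambda>X. moment (cvec (pad N X))"])
  moreover have "2 * M < N"
    by (simp add: N_def)
  ultimately obtain R where "R \<in> ?V" "R \<notin> {A, B', S, T}"
    using rook_graph_fifth_vertex[of A B' S T B M N] bounds by auto
  then show False
    using \<open>?V = {A, B', S, T}\<close> by blast
qed

end
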